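(* Assume the standing assumptions (A1)–(A4) and let $\rho>0$. For every $\epsilon\ge 0$ and every $p\in\mathbb R^{n_p}$, $$|f(p)-f(p^* )|\le \epsilon\ \Longrightarrow\ |f_0(p)-f_0(p^* )|\le D_0\Bigl[\frac{2\epsilon}{\mu_0}\Bigr]^{1/2}+\frac{L_0}{2}\Bigl[\frac{2\epsilon}{\mu_0}\Bigr].$$
   Context: Let $n_p,n_c\ge 1$, let $f_0:\mathbb R^{n_p}\to\mathbb R$ and $c_i:\mathbb R^{n_p}\to\mathbb R$ ($i=1,\dots,n_c$) be continuously differentiable, and let $\{1,\dots,n_c\}=I_s\cup I_h$ be a partition into disjoint sets of soft and hard constraint indices. The original problem is $\min_{p\in\mathbb R^{n_p}} f_0(p)$ subject to $c_i(p)\le 0$ for all $i$; $f^{opt}$ denotes its optimal value and $p^{opt}$ an optimal solution (assumed to exist). For a fixed $\varepsilon_\psi>0$ let $\psi(p):=\sum_{i\in I_s}[\max\{0,c_i(p)\}]^2+\sum_{i\in I_h}[\max\{0,c_i(p)+\varepsilon_\psi\}]^2$, and for a penalty parameter $\rho>0$ let $f(p):=f_0(p)+\rho\,\psi(p)$. A differentiable function $\ell$ belongs to $\mathcal F^1_L$ if $\ell(p_2)\le \ell(p_1)+\langle \ell'(p_1),p_2-p_1\rangle+\frac L2\|p_2-p_1\|^2$ for all $p_1,p_2$, and is $\mu$-strongly convex if $\ell(p_2)\ge \ell(p_1)+\langle \ell'(p_1),p_2-p_1\rangle+\frac \mu2\|p_2-p_1\|^2$ for all $p_1,p_2$. Standing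 assumptions: (A1) $f_0(p)\ge 0$ for all $p$; (A2) $f_0\in\mathcal F^1_{L_0}$ and $\psi\in\mathcal F^1_{L_\psi}$ for some reals $L_0,L_\psi\ge 0$; (A3) $f_0$ is $\mu_0$-strongly convex for some $\mu_0>0$, and $\psi$ is convex; (A4) the set $\mathcal A:=\{p:\psi(p)=0\}$ is nonempty and there is $\beta>0$ with $\psi(p)\ge \beta\,[d(p,\mathcal A)]^2$ for all $p$, where $d(p,\mathcal A):=\min_{z\in\mathcal A}\|z-p\|$. Notation: $\|\cdot\|$ is the Euclidean norm; $p^*$ is the unique minimizer of $f$ over $\mathbb R^{n_p}$; $p_u$ is the unique unconstrained minimizer of $f_0$; $p_a$ is a fixed point with $\psi(p_a)=0$; $D_0:=\sup\{\|f_0'(p)\|:\ f_0(p)\le f_0(p_a)\}$; $d(p):=\|p-p^*\|$. *)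

theory Defs
  imports "HOL-Analysis.Analysis"
begin

text \<open>Quadratic penalty psi(p) for soft constraints Is and hard constraints Ih
  (hard constraints tightened by eps_psi).\<close>
definition psi :: "(nat \<Rightarrow> 'a \<Rightarrow> real) \<Rightarrow> nat set \<Rightarrow> nat set \<Rightarrow> real \<Rightarrow> 'a \<Rightarrow> real" where
  "psi c Is Ih eps_psi p =
     (\<Sum>i\<in>Is. (max 0 (c i p))^2) + (\<Sum>i\<in>Ih. (max 0 (c i p + eps_psi))^2)"

text \<open>Class F^1_L: differentiable with the quadratic upper bound
  (ell' p1 applied to p2 - p1 is the inner product with the gradient).\<close>
definition in_F1L :: "('a::real_normed_vector \<Rightarrow> real) \<Rightarrow> real \<Rightarrow> bool" where
  "in_F1L ell L \<longleftrightarrow> (\<forall>p. ell differentiable (at p)) \<and>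
     (\<forall>p1 p2. ell p2 \<le> ell p1 + frechet_derivative ell (at p1) (p2 - p1) + L / 2 * (norm (p2 - p1))^2)"

definition strongly_convex_with :: "('a::real_normed_vector \<Rightarrow> real) \<Rightarrow> real \<Rightarrow> bool" where
  "strongly_convex_with ell mu \<longleftrightarrow> (\<forall>p. ell differentiable (at p)) \<and>
     (\<forall>p1 p2. ell p2 \<ge> ell p1 + frechet_derivative ell (at p1) (p2 - p1) + mu / 2 * (norm (p2 - p1))^2)"

end

theory Submission
  imports Defs
begin

text \<open>Strong convexity of \<open>f\<^sub>0\<close> and convexity of \<open>\<psi>\<close> make \<open>f = f\<^sub>0 + \<rho>\<psi>\<close> grow
  quadratically away from its minimiser: \<open>\<mu>\<^sub>0/2 \<parallel>p - p\<^sup>*\<parallel>\<^sup>2 \<le> f p - f p\<^sup>* \<le> \<epsilon>\<close>.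
  Hence \<open>\<parallel>p - p\<^sup>*\<parallel> \<le> \<surd>(2\<epsilon>/\<mu>\<^sub>0)\<close>, and the first-order upper bound (smoothness) and
  lower bound (convexity) of \<open>f\<^sub>0\<close> at \<open>p\<^sup>*\<close> give the claim, since \<open>\<psi> \<ge> 0\<close> puts \<open>p\<^sup>*\<close> in
  the sublevel set \<open>{f\<^sub>0 \<le> f\<^sub>0 p\<^sub>a}\<close>, where \<open>\<parallel>f\<^sub>0'\<parallel>\<close> is bounded by \<open>D\<^sub>0\<close>. That set is
  bounded by strong convexity, so \<open>D\<^sub>0\<close> is finite.\<close>

lemma strongly_convex_with_combination:
  fixes f :: "'a::real_normed_vector \<Rightarrow> real"
  assumes sc: "strongly_convex_with f mu" and t: "0 \<le> t" "t \<le> 1"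
  shows "f ((1 - t) *\<^sub>R x + t *\<^sub>R y) \<le> (1 - t) * f x + t * f y - mu / 2 * t * (1 - t) * (norm (x - y))^2"
proof -
  define z where "z = (1 - t) *\<^sub>R x + t *\<^sub>R y"
  define L where "L = frechet_derivative f (at z)"
  have lin: "linear L"
    using sc unfolding L_def strongly_convex_with_def by (simp add: linear_frechet_derivative)
  have x_z: "x - z = t *\<^sub>R (x - y)" and y_z: "y - z = - ((1 - t) *\<^sub>R (x - y))"
    unfolding z_def by (simp_all add: algebra_simps)
  have lx: "f x \<ge> f z + L (x - z) + mu / 2 * (t * norm (x - y))^2"
    using sc t x_z unfolding L_def strongly_convex_with_def by (metis abs_of_nonneg norm_scaleR)
  have ly: "f y \<ge> f z + L (y - z) + mu / 2 * ((1 - t) * norm (x - y))^2"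
    using sc t y_z unfolding L_def strongly_convex_with_def
    by (metis abs_of_nonneg diff_ge_0_iff_ge norm_minus_cancel norm_scaleR)
  have Lx: "L (x - z) = t * L (x - y)" and Ly: "L (y - z) = - ((1 - t) * L (x - y))"
    unfolding x_z y_z using lin by (simp_all add: linear_cmul linear_neg)
  have cancel: "(1 - t) * L (x - z) + t * L (y - z) = 0"
    unfolding Lx Ly by (simp add: algebra_simps)
  have "f z + mu / 2 * t * (1 - t) * (norm (x - y))^2
        = f z + mu / 2 * t * (1 - t) * (norm (x - y))^2 + ((1 - t) * L (x - z) + t * L (y - z))"
    unfolding cancel by simp
  also have "\<dots> = (1 - t) * (f z + L (x - z) + mu / 2 * (t * norm (x - y))^2)
                 + t * (f z + L (y - z) + mu / 2 * ((1 - t) * norm (x - y))^2)"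
    by (simp add: field_simps power2_eq_square)
  also have "\<dots> \<le> (1 - t) * f x + t * f y"
    using lx ly t by (intro add_mono mult_left_mono) auto
  finally show ?thesis
    unfolding z_def by linarith
qed

lemma le_of_forall_scaled_le:
  fixes a b :: real
  assumes "\<And>t. 0 < t \<Longrightarrow> t < 1 \<Longrightarrow> (1 - t) * a \<le> b"
  shows "a \<le> b"
proof -
  have "((\<lambda>t. (1 - t) * a) \<longlongrightarrow> (1 - 0) * a) (at_right 0)"
    by (intro tendsto_intros)
  moreover have "\<forall>\<^sub>F t in at_right 0. (1 - t) * a \<le> b"
    using eventually_at_right_real[of 0 1] assms by (auto elim: eventually_mono)
  ultimately show ?thesis
    using tendsto_upperbound trivial_limit_at_right_real by fastforce
qed

lemma quadratic_growth_at_minimizer: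
  fixes f :: "'a::real_normed_vector \<Rightarrow> real"
  assumes sc: "\<And>x y t. 0 < t \<Longrightarrow> t < 1 \<Longrightarrow>
      f ((1 - t) *\<^sub>R x + t *\<^sub>R y) \<le> (1 - t) * f x + t * f y - mu / 2 * t * (1 - t) * (norm (x - y))^2"
    and min: "\<And>q. f xmin \<le> f q"
  shows "mu / 2 * (norm (p - xmin))^2 \<le> f p - f xmin"
proof (rule le_of_forall_scaled_le)
  fix t :: real assume t: "0 < t" "t < 1"
  have "f xmin \<le> (1 - t) * f xmin + t * f p - mu / 2 * t * (1 - t) * (norm (xmin - p))^2"
    using min[of "(1 - t) *\<^sub>R xmin + t *\<^sub>R p"] sc[OF t, of xmin p] by linarith
  then have "t * ((1 - t) * (mu / 2 * (norm (p - xmin))^2)) \<le> t * (f p - f xmin)"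
    by (simp add: norm_minus_commute algebra_simps)
  then show "(1 - t) * (mu / 2 * (norm (p - xmin))^2) \<le> f p - f xmin"
    using t by simp
qed

lemma strongly_convex_with_add_convex_combination:
  fixes f :: "'a::real_normed_vector \<Rightarrow> real"
  assumes sc: "strongly_convex_with f mu" and cvx: "convex_on UNIV g" and rho: "rho \<ge> 0"
    and t: "0 < t" "t < 1"
  shows "f ((1 - t) *\<^sub>R x + t *\<^sub>R y) + rho * g ((1 - t) *\<^sub>R x + t *\<^sub>R y)
      \<le> (1 - t) * (f x + rho * g x) + t * (f y + rho * g y) - mu / 2 * t * (1 - t) * (norm (x - y))^2"
proof -
  have "g ((1 - t) *\<^sub>R x + t *\<^sub>R y) \<le> (1 - t) * g x + t * g y"
    using convex_onD[OF cvx, of t x y] t by simp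
  then have "rho * g ((1 - t) *\<^sub>R x + t *\<^sub>R y) \<le> rho * ((1 - t) * g x + t * g y)"
    using rho by (rule mult_left_mono)
  moreover have "f ((1 - t) *\<^sub>R x + t *\<^sub>R y) \<le> (1 - t) * f x + t * f y - mu / 2 * t * (1 - t) * (norm (x - y))^2"
    using strongly_convex_with_combination[OF sc] t by simp
  ultimately show ?thesis by (simp add: algebra_simps)
qed

lemma in_F1L_gradient_upper_bound:
  assumes "in_F1L f L" and "(f has_derivative (\<lambda>h. g \<bullet> h)) (at x)"
  shows "f y \<le> f x + g \<bullet> (y - x) + L / 2 * (norm (y - x))^2"
  using assms frechet_derivative_at[OF assms(2)] unfolding in_F1L_def by metis

lemma strongly_convex_with_gradient_lower_bound:
  assumes "strongly_convex_with f mu" and "(f has_derivative (\<lambda>h. g \<bullet> h)) (at x)"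
  shows "f y \<ge> f x + g \<bullet> (y - x) + mu / 2 * (norm (y - x))^2"
  using assms frechet_derivative_at[OF assms(2)] unfolding strongly_convex_with_def by metis

lemma strongly_convex_sublevel_subset_cball:
  fixes f :: "'a::real_inner \<Rightarrow> real"
  assumes lower: "f q \<ge> f x + g \<bullet> (q - x) + mu / 2 * (norm (q - x))^2"
    and mu: "mu > 0" and le: "f q \<le> f x"
  shows "q \<in> cball x (2 * norm g / mu)"
proof -
  have "- (norm g * norm (q - x)) \<le> g \<bullet> (q - x)"
    using Cauchy_Schwarz_ineq2[of g "q - x"] by (simp add: abs_le_iff)
  then have "(mu / 2 * norm (q - x)) * norm (q - x) \<le> norm g * norm (q - x)"
    using lower le by (simp add: power2_eq_square algebra_simps)
  then have "mu / 2 * norm (q - x) \<le> norm g"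
    by (cases "norm (q - x) = 0") (simp_all add: mult_right_le_imp_le)
  then show ?thesis
    using mu by (simp add: dist_norm norm_minus_commute field_simps)
qed

lemma bdd_above_gradient_norm_sublevel:
  fixes f :: "'a::euclidean_space \<Rightarrow> real"
  assumes lower: "\<And>q. f q \<ge> f a + g a \<bullet> (q - a) + mu / 2 * (norm (q - a))^2"
    and mu: "mu > 0" and cont: "continuous_on UNIV g"
  shows "bdd_above {norm (g q) | q. f q \<le> f a}"
proof -
  let ?K = "cball a (2 * norm (g a) / mu)"
  have "q \<in> ?K" if "f q \<le> f a" for q
    using strongly_convex_sublevel_subset_cball[OF lower[of q] mu that] .
  then have "{norm (g q) | q. f q \<le> f a} \<subseteq> (\<lambda>q. norm (g q)) ` ?K"
    by blast
  moreover have "compact ((\<lambda>q. norm (g q)) ` ?K)"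
    by (intro compact_continuous_image continuous_on_norm continuous_on_subset[OF cont]) auto
  ultimately show ?thesis
    by (meson bdd_above_mono bounded_imp_bdd_above compact_imp_bounded)
qed

lemma abs_diff_le_first_order_bounds:
  fixes f :: "'a::real_inner \<Rightarrow> real"
  assumes upper: "f y \<le> f x + g \<bullet> (y - x) + L / 2 * (norm (y - x))^2"
    and lower: "f y \<ge> f x + g \<bullet> (y - x) + mu / 2 * (norm (y - x))^2" and mu: "mu \<ge> 0"
  shows "\<bar>f y - f x\<bar> \<le> norm g * norm (y - x) + L / 2 * (norm (y - x))^2"
proof -
  have "\<bar>g \<bullet> (y - x)\<bar> \<le> norm g * norm (y - x)"
    by (rule Cauchy_Schwarz_ineq2)
  moreover have "mu / 2 * (norm (y - x))^2 \<ge> 0"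
    using mu by simp
  ultimately show ?thesis
    using upper lower by linarith
qed

lemma psi_nonneg: "psi c Is Ih eps_psi p \<ge> 0"
  unfolding psi_def by (intro add_nonneg_nonneg sum_nonneg) auto

theorem lemma4:
  fixes f0 :: "'a::euclidean_space \<Rightarrow> real"
    and g0 :: "'a \<Rightarrow> 'a"
    and c :: "nat \<Rightarrow> 'a \<Rightarrow> real"
    and nc :: nat and Is Ih :: "nat set"
    and eps_psi rho L0 Lpsi mu0 beta eps :: real
    and pstar pa p :: 'a
  assumes nc: "nc \<ge> 1"
    and part: "Is \<union> Ih = {1..nc}" "Is \<inter> Ih = {}"
    and f0_C1: "\<forall>q. (f0 has_derivative (\<lambda>h. g0 q \<bullet> h)) (at q)" "continuous_on UNIV g0"
    and c_C1: "\<forall>i\<in>{1..nc}. \<exists>g :: 'a \<Rightarrow> 'a.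
                 (\<forall>q. (c i has_derivative (\<lambda>h. g q \<bullet> h)) (at q)) \<and> continuous_on UNIV g"
    and eps_psi: "eps_psi > 0"
    and A1: "\<forall>q. f0 q \<ge> 0"
    and A2: "L0 \<ge> 0" "Lpsi \<ge> 0" "in_F1L f0 L0" "in_F1L (psi c Is Ih eps_psi) Lpsi"
    and A3: "mu0 > 0" "strongly_convex_with f0 mu0" "convex_on UNIV (psi c Is Ih eps_psi)"
    and A4: "{q. psi c Is Ih eps_psi q = 0} \<noteq> {}" "beta > 0"
            "\<forall>q. psi c Is Ih eps_psi q \<ge> beta * (infdist q {z. psi c Is Ih eps_psi z = 0})^2"
    and rho: "rho > 0"
    and pstar: "\<forall>q. f0 pstar + rho * psi c Is Ih eps_psi pstar \<le> f0 q + rho * psi c Is Ih eps_psi q"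
    and pa: "psi c Is Ih eps_psi pa = 0"
    and eps: "eps \<ge> 0"
    and close: "\<bar>(f0 p + rho * psi c Is Ih eps_psi p) - (f0 pstar + rho * psi c Is Ih eps_psi pstar)\<bar> \<le> eps"
  shows "\<bar>f0 p - f0 pstar\<bar> \<le>
           Sup {norm (g0 q) | q. f0 q \<le> f0 pa} * sqrt (2 * eps / mu0) + L0 / 2 * (2 * eps / mu0)"
proof -
  let ?P = "psi c Is Ih eps_psi"
  let ?S = "{norm (g0 q) | q. f0 q \<le> f0 pa}"
  define d where "d = norm (p - pstar)"
  have deriv: "(f0 has_derivative (\<lambda>h. g0 q \<bullet> h)) (at q)" for q
    using f0_C1(1) by blast
  note upper = in_F1L_gradient_upper_bound[OF A2(3) deriv]
    and lower = strongly_convex_with_gradient_lower_bound[OF A3(2) deriv]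
  have "mu0 / 2 * d^2 \<le> (f0 p + rho * ?P p) - (f0 pstar + rho * ?P pstar)"
    unfolding d_def
    using quadratic_growth_at_minimizer[where f = "\<lambda>q. f0 q + rho * ?P q",
        OF strongly_convex_with_add_convex_combination[OF A3(2,3) less_imp_le[OF rho]]] pstar
    by blast
  then have d2: "d^2 \<le> 2 * eps / mu0"
    using close A3(1) by (simp add: field_simps)
  then have d_le: "d \<le> sqrt (2 * eps / mu0)"
    by (simp add: d_def real_le_rsqrt)
  have "f0 pstar + rho * ?P pstar \<le> f0 pa"
    using pstar[rule_format, of pa] pa by simp
  then have "f0 pstar \<le> f0 pa"
    using mult_nonneg_nonneg[OF less_imp_le[OF rho] psi_nonneg[of c Is Ih eps_psi pstar]] by linarith
  then have "norm (g0 pstar) \<le> Sup ?S"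
    using bdd_above_gradient_norm_sublevel[OF lower A3(1) f0_C1(2)] by (intro cSup_upper) blast+
  then have "norm (g0 pstar) * d \<le> Sup ?S * sqrt (2 * eps / mu0)"
    using d_le order_trans[OF norm_ge_zero] by (intro mult_mono) (simp_all add: d_def)
  moreover have "L0 / 2 * d^2 \<le> L0 / 2 * (2 * eps / mu0)"
    using d2 A2(1) by (intro mult_left_mono) auto
  moreover have "\<bar>f0 p - f0 pstar\<bar> \<le> norm (g0 pstar) * d + L0 / 2 * d^2"
    unfolding d_def using upper lower less_imp_le[OF A3(1)] by (rule abs_diff_le_first_order_bounds)
  ultimately show ?thesis by linarith
qed

end
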